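(* Let $n\ge0$ and $k\ge1$. For every formula $\alpha$: if $\vdash_{L_n^k}\alpha$ then $\vDash_{\mathcal{R}_n^k}\alpha$.
   Context: Formulas are built from a countable set of propositional variables using unary $\neg,\circ$ and binary $\land,\lor,\to$; $\circ^0\alpha=\alpha$, $\circ^{m+1}\alpha=\circ(\circ^m\alpha)$, $\alpha\leftrightarrow\beta:=(\alpha\to\beta)\land(\beta\to\alpha)$. mbC is the Hilbert calculus with the axiom schemas of a standard axiomatization of positive classical propositional logic in $\land,\lor,\to$, plus (TND) $\alpha\lor\neg\alpha$ and (bc1) $\circ\alpha\to(\alpha\to(\neg\alpha\to\beta))$, modus ponens being the only rule; mbCciw is mbC plus (ciw) $\circ\alpha\lor(\alpha\land\neg\alpha)$. For $n\ge0$, $k\ge1$, $L_n^k$ is mbCciw plus (cc$^n$) $\circ^{n+2}\alpha$, (dn) $\neg\neg\alpha\leftrightarrow\alpha$, and (ip$^j$) $\neg\circ^j\neg\alpha\leftrightarrow\neg\circ^j\alpha$ for each $1\le j<k$. $\mathcal{M}_1$ is the three-valued Nmatrix with values $T,t,F$, designated set $D=\{T,t\}$, and: $\neg T=\{F\}$, $\neg t=\{t\}$, $\neg F=\{T\}$; $\circ T=\circ F=\{T,t\}$, $\circ t=\{F\}$; $x\land y=\{T,t\}$ if $x,y\in D$ else $\{F\}$; $x\lor y=\{T,t\}$ if $x\in D$ or $y\in D$ else $\{F\}$; $x\to y=\{T,t\}$ if $x\notin D$ or $y\in D$ else $\{F\}$. A valuation over $\mathcal{M}_1$ is a map $\vartheta$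 from formulas to $\{T,t,F\}$ respecting these multioperations (the value of a compound is in the set assigned to the values of its components). $\mathcal{F}_n^k$ is the set of valuations $\vartheta$ over $\mathcal{M}_1$ such that for every formula $\alpha$: (vCc$^n$) if $\vartheta(\circ^n\alpha)\in\{T,F\}$ then $\vartheta(\circ^{n+1}\alpha)=T$; and (vip$^j$) $\vartheta(\circ^j\alpha)=\vartheta(\circ^j\neg\alpha)$ for each $1\le j\le k-1$. $\mathcal{R}_n^k=\langle\mathcal{M}_1,\mathcal{F}_n^k\rangle$, and $\vDash_{\mathcal{R}_n^k}\alpha$ means $\vartheta(\alpha)\in D$ for all $\vartheta\in\mathcal{F}_n^k$. *)

theory Defs
  imports Main
begin

datatype fm =
    Var nat
  | Neg fm
  | Circ fm
  | And fm fm
  | Or fm fm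
  | Imp fm fm

fun circ_pow :: "nat \<Rightarrow> fm \<Rightarrow> fm" where
  "circ_pow 0 a = a"
| "circ_pow (Suc m) a = Circ (circ_pow m a)"

definition Iff :: "fm \<Rightarrow> fm \<Rightarrow> fm" where
  "Iff a b = And (Imp a b) (Imp b a)"

text \<open>Positive classical logic is given by the standard axioms Ax1--Ax9 of mbC
(Carnielli--Coniglio--Marcos), modus ponens is the only rule.\<close>

inductive derivL :: "nat \<Rightarrow> nat \<Rightarrow> fm \<Rightarrow> bool" for n k where
  Ax1: "derivL n k (Imp a (Imp b a))"
| Ax2: "derivL n k (Imp (Imp a b) (Imp (Imp a (Imp b c)) (Imp a c)))"
| Ax3: "derivL n k (Imp a (Imp b (And a b)))"
| Ax4: "derivL n k (Imp (And a b) a)"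
| Ax5: "derivL n k (Imp (And a b) b)"
| Ax6: "derivL n k (Imp a (Or a b))"
| Ax7: "derivL n k (Imp b (Or a b))"
| Ax8: "derivL n k (Imp (Imp a c) (Imp (Imp b c) (Imp (Or a b) c)))"
| Ax9: "derivL n k (Or a (Imp a b))"
| TND: "derivL n k (Or a (Neg a))"
| bc1: "derivL n k (Imp (Circ a) (Imp a (Imp (Neg a) b)))"
| ciw: "derivL n k (Or (Circ a) (And a (Neg a)))"
| cc: "derivL n k (circ_pow (n + 2) a)"
| dn: "derivL n k (Iff (Neg (Neg a)) a)"
| ip: "1 \<le> j \<Longrightarrow> j < k \<Longrightarrow>
        derivL n k (Iff (Neg (circ_pow j (Neg a))) (Neg (circ_pow j a)))"
| MP: "derivL n k a \<Longrightarrow> derivL n k (Imp a b) \<Longrightarrow> derivL n k b"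

datatype val = VT | Vt | VF

definition des :: "val set" where "des = {VT, Vt}"

fun negM :: "val \<Rightarrow> val set" where
  "negM VT = {VF}" | "negM Vt = {Vt}" | "negM VF = {VT}"

fun circM :: "val \<Rightarrow> val set" where
  "circM VT = {VT, Vt}" | "circM Vt = {VF}" | "circM VF = {VT, Vt}"

definition andM :: "val \<Rightarrow> val \<Rightarrow> val set" where
  "andM x y = (if x \<in> des \<and> y \<in> des then {VT, Vt} else {VF})"

definition orM :: "val \<Rightarrow> val \<Rightarrow> val set" where
  "orM x y = (if x \<in> des \<or> y \<in> des then {VT, Vt} else {VF})"

definition impM :: "val \<Rightarrow> val \<Rightarrow> val set" where
  "impM x y = (if x \<notin> des \<or> y \<in> des then {VT, Vt} else {VF})"

definition valuation :: "(fm \<Rightarrow> val) \<Rightarrow> bool" where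
  "valuation v \<longleftrightarrow> (\<forall>a b.
      v (Neg a) \<in> negM (v a) \<and>
      v (Circ a) \<in> circM (v a) \<and>
      v (And a b) \<in> andM (v a) (v b) \<and>
      v (Or a b) \<in> orM (v a) (v b) \<and>
      v (Imp a b) \<in> impM (v a) (v b))"

definition F_nk :: "nat \<Rightarrow> nat \<Rightarrow> (fm \<Rightarrow> val) set" where
  "F_nk n k = {v. valuation v \<and>
     (\<forall>a. v (circ_pow n a) \<in> {VT, VF} \<longrightarrow> v (circ_pow (n + 1) a) = VT) \<and>
     (\<forall>a j. 1 \<le> j \<and> j \<le> k - 1 \<longrightarrow> v (circ_pow j a) = v (circ_pow j (Neg a)))}"

definition validR :: "nat \<Rightarrow> nat \<Rightarrow> fm \<Rightarrow> bool" where
  "validR n k a \<longleftrightarrow> (\<forall>v \<in> F_nk n k. v a \<in> des)"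

end

theory Submission
  imports Defs
begin

(* Modus ponens and the axioms of mbCciw
   and (dn) hold in every valuation over M_1, because negation is deterministic and the
   binary connectives are classical with respect to designation. The axiom (cc^n) is
   enforced by (vCc^n), and each (ip^j) by (vip^j), again because the value of a negation
   is a function of the value of its argument. *)

lemma des_simps [simp]: "VT \<in> des" "Vt \<in> des" "VF \<notin> des"
  by (simp_all add: des_def)

lemma valuationD:
  assumes "valuation v"
  shows "v (Neg a) \<in> negM (v a)" and "v (Circ a) \<in> circM (v a)"
    and "v (And a b) \<in> andM (v a) (v b)" and "v (Or a b) \<in> orM (v a) (v b)"
    and "v (Imp a b) \<in> impM (v a) (v b)"
  using assms unfolding valuation_def by blast+

lemma valuation_Neg:
  "valuation v \<Longrightarrow> v (Neg a) = (case v a of VT \<Rightarrow> VF | Vt \<Rightarrow> Vt | VF \<Rightarrow> VT)"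
  using valuationD(1)[of v a] by (cases "v a") auto

lemma valuation_Neg_Neg: "valuation v \<Longrightarrow> v (Neg (Neg a)) = v a"
  by (cases "v a") (simp_all add: valuation_Neg[of v])

lemma valuation_Circ_des: "valuation v \<Longrightarrow> v (Circ a) \<in> des \<longleftrightarrow> v a \<noteq> Vt"
  using valuationD(2)[of v a] by (cases "v a") (auto simp: des_def)

lemma valuation_And_des: "valuation v \<Longrightarrow> v (And a b) \<in> des \<longleftrightarrow> v a \<in> des \<and> v b \<in> des"
  using valuationD(3)[of v a b] by (auto simp: andM_def des_def split: if_splits)

lemma valuation_Or_des: "valuation v \<Longrightarrow> v (Or a b) \<in> des \<longleftrightarrow> v a \<in> des \<or> v b \<in> des"
  using valuationD(4)[of v a b] by (auto simp: orM_def des_def split: if_splits)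

lemma valuation_Imp_des: "valuation v \<Longrightarrow> v (Imp a b) \<in> des \<longleftrightarrow> (v a \<in> des \<longrightarrow> v b \<in> des)"
  using valuationD(5)[of v a b] by (auto simp: impM_def des_def split: if_splits)

lemma valuation_Iff_des: "valuation v \<Longrightarrow> v (Iff a b) \<in> des \<longleftrightarrow> (v a \<in> des \<longleftrightarrow> v b \<in> des)"
  by (auto simp: Iff_def valuation_And_des valuation_Imp_des)

lemmas valuation_des_simps =
  valuation_And_des valuation_Or_des valuation_Imp_des valuation_Iff_des valuation_Circ_des

lemma F_nk_D:
  assumes "v \<in> F_nk n k"
  shows F_nk_valuation: "valuation v"
    and F_nk_vCc: "v (circ_pow n a) \<in> {VT, VF} \<Longrightarrow> v (circ_pow (n + 1) a) = VT"
    and F_nk_vip: "1 \<le> j \<Longrightarrow> j \<le> k - 1 \<Longrightarrow> v (circ_pow j a) = v (circ_pow j (Neg a))"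
  using assms unfolding F_nk_def by blast+

(* If the n-th iterate is classical, (vCc^n) makes the next one T; otherwise it is t and
   the next one is F. Either way the (n+1)-th iterate is not t, so the (n+2)-th is
   designated. *)
lemma F_nk_circ_pow_des:
  assumes "v \<in> F_nk n k"
  shows "v (circ_pow (n + 2) a) \<in> des"
proof -
  have v: "valuation v"
    using assms by (rule F_nk_valuation)
  have "v (Circ (circ_pow n a)) \<noteq> Vt"
  proof (cases "v (circ_pow n a) = Vt")
    case True
    then show ?thesis
      using valuationD(2)[OF v, of "circ_pow n a"] by simp
  next
    case False
    then show ?thesis
      using F_nk_vCc[OF assms, of a] by (cases "v (circ_pow n a)") auto
  qed
  then show ?thesis
    using valuation_Circ_des[OF v, of "Circ (circ_pow n a)"] by (simp add: numeral_2_eq_2)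
qed

theorem theorem25:
  fixes n k :: nat and \<alpha> :: fm
  assumes "k \<ge> 1"
  assumes "derivL n k \<alpha>"
  shows "validR n k \<alpha>"
  unfolding validR_def
proof
  fix v
  assume F: "v \<in> F_nk n k"
  then have v: "valuation v"
    by (rule F_nk_valuation)
  show "v \<alpha> \<in> des"
    using assms(2)
  proof induction
    case (TND a)
    show ?case by (cases "v a") (simp_all add: valuation_des_simps[OF v] valuation_Neg[OF v])
  next
    case (bc1 a b)
    show ?case by (cases "v a") (simp_all add: valuation_des_simps[OF v] valuation_Neg[OF v])
  next
    case (ciw a)
    show ?case by (cases "v a") (simp_all add: valuation_des_simps[OF v] valuation_Neg[OF v])
  next
    case (cc a)
    show ?case
      using F by (rule F_nk_circ_pow_des)
  next
    case (dn a)
    show ?case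
      by (simp add: valuation_Iff_des[OF v] valuation_Neg_Neg[OF v])
  next
    case (ip j a)
    then have "v (circ_pow j (Neg a)) = v (circ_pow j a)"
      using F_nk_vip[OF F, of j a] by simp
    then show ?case
      by (simp add: valuation_Iff_des[OF v] valuation_Neg[OF v])
  next
    case (MP a b)
    then show ?case
      by (simp add: valuation_Imp_des[OF v])
  qed (auto simp: valuation_des_simps[OF v])
qed

end
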